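(* Let $p\in\mathbb{C}[x,y]$ be a primitive polynomial whose zero locus $p^{-1}(0)$ is isomorphic to $\mathbb{C}$, let $\alpha$ be a polynomial automorphism of $\mathbb{C}^2$ and $q=p\circ\alpha$, and assume that either $q$ is linear or, for some relatively prime integers $k,l\ge2$ and some $n\ge1$, the leading quasi-homogeneous part of $q$ with respect to the weighted degree function determined by $(k,l)$ is $(x^k+y^l)^n$. Let $\pi:\mathbb{C}^2\to\mathbb{C}$, $(x,y)\mapsto x$, let $\Delta_r=\{x\in\mathbb{C}:|x|<r\}$ with closure $\bar\Delta_r$, and let $\delta>0$ and $r>0$ be such that $\pi$ maps $\{(x,y) : \frac{\partial q}{\partial y}(x,y)=0,\ |q(x,y)|<\delta\}$ into $\Delta_r$. Then for every $c\in\mathbb{C}$ with $0<|c|<\delta$, the set $\Gamma_c\cap\pi^{-1}(\mathbb{C}\setminus\bar\Delta_r)$, where $\Gamma_c=q^{-1}(c)$, is a disjoint union of components each biholomorphic to a punctured disc.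
   Context: A polynomial $p\in\mathbb{C}[x,y]$ is primitive if it cannot be written as $f\circ g$ with $g\in\mathbb{C}[x,y]$ and $f\in\mathbb{C}[t]$ of degree at least $2$. For a pair $(k,l)$ of relatively prime natural numbers, the weighted degree function $d$ is defined on nonzero $r(x,y)=\sum_{i,j}a_{ij}x^iy^j$ by $d(r)=\max_{(i,j)\in I}(li+kj)$, where $I=\{(i,j)\in\mathbb{Z}_{\ge0}^2 : a_{ij}\neq 0\}$; with $\hat I=\{(i,j)\in I : li+kj=d(r)\}$, the leading quasi-homogeneous part of $r$ is $\hat r(x,y)=\sum_{(i,j)\in\hat I}a_{ij}x^iy^j$. *)

theory Defs
  imports "HOL-Complex_Analysis.Complex_Analysis" "HOL-Computational_Algebra.Polynomial"
begin

text \<open>Bivariate polynomials in C[x,y] are represented as complex poly poly: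
  the outer variable is y, the coefficients are polynomials in x.
  The coefficient a_ij of x^i y^j of r is coeff (coeff r j) i.\<close>

type_synonym bpoly = "complex poly poly"

definition beval :: "bpoly \<Rightarrow> complex \<Rightarrow> complex \<Rightarrow> complex" where
  "beval r x y = poly (poly r [:y:]) x"

definition bcoeff :: "bpoly \<Rightarrow> nat \<Rightarrow> nat \<Rightarrow> complex" where
  "bcoeff r i j = coeff (coeff r j) i"

definition bX :: bpoly where "bX = [:[:0, 1:]:]"
definition bY :: bpoly where "bY = [:0, 1:]"

definition bconst :: "complex \<Rightarrow> bpoly" where "bconst c = [:[:c:]:]"

definition ucomp :: "complex poly \<Rightarrow> bpoly \<Rightarrow> bpoly" where
  "ucomp f g = poly (map_poly bconst f) g"

definition primitive :: "bpoly \<Rightarrow> bool" where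
  "primitive p \<longleftrightarrow> \<not> (\<exists>f g. degree f \<ge> 2 \<and> p = ucomp f g)"

definition zero_locus_iso_C :: "bpoly \<Rightarrow> bool" where
  "zero_locus_iso_C p \<longleftrightarrow>
     (\<exists>\<phi>1 \<phi>2 :: complex poly. \<exists>\<psi> :: bpoly.
        (\<lambda>t. (poly \<phi>1 t, poly \<phi>2 t)) ` UNIV = {(x, y). beval p x y = 0} \<and>
        (\<forall>t. beval \<psi> (poly \<phi>1 t) (poly \<phi>2 t) = t) \<and>
        (\<forall>x y. beval p x y = 0 \<longrightarrow>
            poly \<phi>1 (beval \<psi> x y) = x \<and> poly \<phi>2 (beval \<psi> x y) = y))"

definition bmap :: "bpoly \<times> bpoly \<Rightarrow> complex \<times> complex \<Rightarrow> complex \<times> complex" where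
  "bmap a z = (beval (fst a) (fst z) (snd z), beval (snd a) (fst z) (snd z))"

definition poly_automorphism :: "bpoly \<times> bpoly \<Rightarrow> bool" where
  "poly_automorphism a \<longleftrightarrow>
     (\<exists>b. (\<forall>z. bmap b (bmap a z) = z) \<and> (\<forall>z. bmap a (bmap b z) = z))"

definition blinear :: "bpoly \<Rightarrow> bool" where
  "blinear r \<longleftrightarrow> (\<forall>i j. i + j \<ge> 2 \<longrightarrow> bcoeff r i j = 0)"

definition wdeg :: "nat \<Rightarrow> nat \<Rightarrow> bpoly \<Rightarrow> nat" where
  "wdeg k l r = Max {l * i + k * j | i j. bcoeff r i j \<noteq> 0}"

definition lqh_coeff :: "nat \<Rightarrow> nat \<Rightarrow> bpoly \<Rightarrow> nat \<Rightarrow> nat \<Rightarrow> complex" where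
  "lqh_coeff k l r i j = (if l * i + k * j = wdeg k l r then bcoeff r i j else 0)"

definition lqh_part_is :: "nat \<Rightarrow> nat \<Rightarrow> bpoly \<Rightarrow> bpoly \<Rightarrow> bool" where
  "lqh_part_is k l r s \<longleftrightarrow> (\<forall>i j. lqh_coeff k l r i j = bcoeff s i j)"

text \<open>Biholomorphism from the punctured unit disc onto a set S in C^2
  (S a smooth complex curve): a holomorphic immersion which is a homeomorphism onto S.\<close>
definition biholo_punctured_disc :: "(complex \<times> complex) set \<Rightarrow> bool" where
  "biholo_punctured_disc S \<longleftrightarrow>
     (\<exists>f g. homeomorphism (ball 0 1 - {0}) S f g \<and>
        (\<lambda>z. fst (f z)) holomorphic_on (ball 0 1 - {0}) \<and>
        (\<lambda>z. snd (f z)) holomorphic_on (ball 0 1 - {0}) \<and>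
        (\<forall>z \<in> ball 0 1 - {0}. deriv (\<lambda>w. fst (f w)) z \<noteq> 0 \<or> deriv (\<lambda>w. snd (f w)) z \<noteq> 0))"

end

theory Submission
  imports Defs "HOL-Computational_Algebra.Fundamental_Theorem_Algebra"
begin

text \<open>Subtracting c, the polynomial Q = q - c has constant leading coefficient as a polynomial in y
  (both for linear q and for the quasi-homogeneous normal form), and by the choice of \<delta> and r its
  roots in y over E = {|x| > r} are all simple. So the first projection makes the part S of the
  zero set of Q over E a covering of E with N sheets. Lifting exp from the half-plane
  Re u > ln r through this covering gives a map g onto a whole component of S; g has a least period
  2 \<pi> i m, so t \<mapsto> g (ln r - m log t) is a homeomorphism from the punctured unit disc onto the
  component. Its first coordinate is r / t^m, and its second one is holomorphic by implicit
  differentiation, since Q has nonzero y-derivative on S.\<close>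

section \<open>Bivariate polynomials\<close>

definition yslice :: "bpoly \<Rightarrow> complex \<Rightarrow> complex poly" where
  "yslice Q x = map_poly (\<lambda>c. poly c x) Q"

lemma coeff_yslice: "coeff (yslice Q x) j = poly (coeff Q j) x"
  by (simp add: yslice_def coeff_map_poly)

lemma beval_yslice: "beval Q x y = poly (yslice Q x) y"
  by (induction Q rule: pCons_induct) (simp_all add: beval_def yslice_def map_poly_pCons)

lemma yslice_pderiv: "yslice (pderiv Q) x = pderiv (yslice Q x)"
  by (rule poly_eqI) (simp add: coeff_yslice coeff_pderiv)

lemma beval_eq_sum: "beval Q x y = (\<Sum>j\<le>degree Q. poly (coeff Q j) x * y ^ j)"
proof -
  have "degree (yslice Q x) \<le> degree Q" by (simp add: yslice_def map_poly_degree_leq)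
  then have "poly (yslice Q x) y = (\<Sum>j\<le>degree Q. coeff (yslice Q x) j * y ^ j)"
    unfolding poly_altdef by (intro sum.mono_neutral_left) (auto simp: coeff_eq_0)
  then show ?thesis by (simp add: beval_yslice coeff_yslice)
qed

lemma beval_0 [simp]: "beval 0 x y = 0"
  and beval_add [simp]: "beval (A + B) x y = beval A x y + beval B x y"
  and beval_diff [simp]: "beval (A - B) x y = beval A x y - beval B x y"
  and beval_power [simp]: "beval (A ^ n) x y = beval A x y ^ n"
  and beval_bconst [simp]: "beval (bconst c) x y = c"
  and beval_bX [simp]: "beval bX x y = x"
  and beval_bY [simp]: "beval bY x y = y"
  by (simp_all add: beval_def bconst_def bX_def bY_def)

lemma coeff_bconst: "coeff (bconst c) j = (if j = 0 then [:c:] else 0)"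
  by (simp add: bconst_def coeff_pCons split: nat.splits)

lemma pderiv_bconst [simp]: "pderiv (bconst c) = 0"
  by (simp add: bconst_def pderiv_pCons)

lemma finite_points_separated:
  fixes Y :: "'a::metric_space set"
  assumes "finite Y"
  obtains \<epsilon> where "\<epsilon> > 0"
    "\<And>y1 y2 w. y1 \<in> Y \<Longrightarrow> y2 \<in> Y \<Longrightarrow> dist w y1 < \<epsilon> \<Longrightarrow> dist w y2 < \<epsilon> \<Longrightarrow> y1 = y2"
proof -
  define D where "D = (\<lambda>(y1, y2). dist y1 y2 / 2) ` {(y1, y2). y1 \<in> Y \<and> y2 \<in> Y \<and> y1 \<noteq> y2}"
  have "finite D"
    unfolding D_def by (rule finite_imageI, rule finite_subset[of _ "Y \<times> Y"]) (use assms in auto)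
  define \<epsilon> where "\<epsilon> = Min (insert 1 D)"
  have "\<epsilon> > 0" unfolding \<epsilon>_def using \<open>finite D\<close> by (auto simp: Min_gr_iff D_def)
  moreover have "y1 = y2" if "y1 \<in> Y" "y2 \<in> Y" "dist w y1 < \<epsilon>" "dist w y2 < \<epsilon>" for y1 y2 w
  proof (rule ccontr)
    assume "y1 \<noteq> y2"
    then have "dist y1 y2 / 2 \<in> D" unfolding D_def using that by force
    then have "\<epsilon> \<le> dist y1 y2 / 2" unfolding \<epsilon>_def using \<open>finite D\<close> by (intro Min_le) auto
    moreover have "dist y1 y2 \<le> dist w y1 + dist w y2" by (metis dist_commute dist_triangle)
    ultimately show False using that by linarith
  qed
  ultimately show thesis using that by blast
qed

lemma card_eq_relation_bijective:
  assumes "finite A" "finite B" "card A = card B"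
    and ex: "\<And>a. a \<in> A \<Longrightarrow> \<exists>b\<in>B. R b a"
    and functional: "\<And>b a a'. b \<in> B \<Longrightarrow> a \<in> A \<Longrightarrow> a' \<in> A \<Longrightarrow> R b a \<Longrightarrow> R b a' \<Longrightarrow> a = a'"
  shows "\<And>b. b \<in> B \<Longrightarrow> \<exists>a\<in>A. R b a"
    and "\<And>a. a \<in> A \<Longrightarrow> \<exists>!b. b \<in> B \<and> R b a"
proof -
  obtain c where c: "\<And>a. a \<in> A \<Longrightarrow> c a \<in> B \<and> R (c a) a" using ex by metis
  have "inj_on c A" by (rule inj_onI) (metis c functional)
  then have cA: "c ` A = B"
    using c assms(1-3) by (intro card_subset_eq) (auto simp: card_image)
  show "\<exists>a\<in>A. R b a" if "b \<in> B" for b using that c cA by force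
  show "\<exists>!b. b \<in> B \<and> R b a" if "a \<in> A" for a
  proof (rule ex1I[of _ "c a"])
    show "c a \<in> B \<and> R (c a) a" using c that .
    fix b assume "b \<in> B \<and> R b a"
    then obtain a' where "a' \<in> A" "b = c a'" using cA by auto
    then show "b = c a" using c functional that \<open>b \<in> B \<and> R b a\<close> by metis
  qed
qed

lemma homeomorphism_graph:
  fixes f :: "'a::topological_space \<Rightarrow> 'b::topological_space"
  assumes "continuous_on T f"
  shows "homeomorphism ((\<lambda>x. (x, f x)) ` T) T fst (\<lambda>x. (x, f x))"
  unfolding homeomorphism_def
proof (intro conjI ballI)
  show "continuous_on T (\<lambda>x. (x, f x))" by (intro continuous_intros assms)
  show "continuous_on ((\<lambda>x. (x, f x)) ` T) fst" by (intro continuous_intros)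
qed (auto simp: image_image)

definition two_pi_i :: "int \<Rightarrow> complex" where
  "two_pi_i k = \<i> * (of_int k * (of_real pi * 2))"

lemma two_pi_i_add: "two_pi_i (a + b) = two_pi_i a + two_pi_i b"
  and two_pi_i_diff: "two_pi_i (a - b) = two_pi_i a - two_pi_i b"
  and two_pi_i_0 [simp]: "two_pi_i 0 = 0"
  and Re_two_pi_i [simp]: "Re (two_pi_i k) = 0"
  by (simp_all add: two_pi_i_def algebra_simps)

lemma exp_add_two_pi_i [simp]: "exp (z + two_pi_i k) = exp z"
  by (simp add: two_pi_i_def)

lemma exp_eq_imp_two_pi_i: "exp w = exp z \<Longrightarrow> \<exists>k. w = z + two_pi_i k"
  by (auto simp: exp_eq two_pi_i_def algebra_simps)

lemma continuous_log_at:
  assumes "t1 \<noteq> (0::complex)"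
  obtains lg where "isCont lg t1" "\<And>t. t \<noteq> 0 \<Longrightarrow> exp (lg t) = t"
proof (cases "t1 \<in> \<real>\<^sub>\<le>\<^sub>0")
  case False
  then show thesis by (intro that[of Ln]) (auto intro!: continuous_at_Ln)
next
  case True
  then have "- t1 \<notin> \<real>\<^sub>\<le>\<^sub>0" using assms by (auto simp: complex_nonpos_Reals_iff complex_eq_iff)
  then have "isCont (\<lambda>t. Ln (- t) + of_real pi * \<i>) t1" by (intro continuous_intros) auto
  moreover have "exp (Ln (- t) + of_real pi * \<i>) = t" if "t \<noteq> 0" for t
    using that by (simp add: exp_add)
  ultimately show thesis by (rule that)
qed

lemma continuous_root_at:
  fixes x1 t1 :: complex
  assumes "x1 \<noteq> 0" "m > 0"
  obtains \<psi> where "isCont \<psi> x1" "\<psi> x1 = t1" "\<And>x. x \<noteq> 0 \<Longrightarrow> \<psi> x ^ m * x = t1 ^ m * x1"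
proof
  define \<psi> where "\<psi> x = t1 * exp (- Ln (x / x1) / of_nat m)" for x
  have "x1 / x1 \<notin> \<real>\<^sub>\<le>\<^sub>0" using assms by (simp add: complex_nonpos_Reals_iff)
  then show "isCont \<psi> x1" unfolding \<psi>_def by (intro continuous_intros) (use assms in auto)
  show "\<psi> x1 = t1" using assms by (simp add: \<psi>_def)
  fix x :: complex assume "x \<noteq> 0"
  have "exp (- Ln (x / x1) / of_nat m) ^ m = exp (of_nat m * (- Ln (x / x1) / of_nat m))"
    by (simp only: exp_of_nat_mult)
  also have "\<dots> = x1 / x" using assms \<open>x \<noteq> 0\<close> by (simp add: exp_minus)
  finally show "\<psi> x ^ m * x = t1 ^ m * x1"
    using \<open>x \<noteq> 0\<close> by (simp add: \<psi>_def power_mult_distrib)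
qed

lemma poly_difference_quotient:
  fixes p :: "complex poly"
  obtains B where "isCont B c" "B c = poly (pderiv p) c" "\<And>w. poly p w - poly p c = (w - c) * B w"
proof
  define B where "B w = (if w = c then poly (pderiv p) c else (poly p w - poly p c) / (w - c))" for w
  have "((\<lambda>w. (poly p w - poly p c) / (w - c)) \<longlongrightarrow> poly (pderiv p) c) (at c)"
    using poly_DERIV[of p c] by (simp add: has_field_derivative_iff)
  then have "(B \<longlongrightarrow> poly (pderiv p) c) (at c)"
    by (rule Lim_transform_within[where d=1]) (auto simp: B_def)
  then show "isCont B c" by (simp add: isCont_def B_def)
  show "B c = poly (pderiv p) c" "poly p w - poly p c = (w - c) * B w" for w
    by (simp_all add: B_def)
qed

text \<open>Implicit differentiation: writing Q(x, y) - Q(x1, y1) = (x - x1) D(x, y) + (y - y1) B(y) with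
  D and B continuous and B(y1) the partial derivative in y, the difference quotient of Y at t1 is
  -((X t - x1) / (t - t1)) D(X t, Y t) / B(Y t).\<close>

lemma implicit_field_differentiable:
  fixes Q :: bpoly and X Y :: "complex \<Rightarrow> complex"
  assumes X: "(X has_field_derivative X') (at t1)"
    and Y: "isCont Y t1"
    and zero: "eventually (\<lambda>t. beval Q (X t) (Y t) = 0) (nhds t1)"
    and nonsingular: "beval (pderiv Q) (X t1) (Y t1) \<noteq> 0"
  shows "Y field_differentiable (at t1)"
proof -
  define x1 y1 where "x1 = X t1" and "y1 = Y t1"
  obtain B where B: "isCont B y1" "B y1 = poly (pderiv (yslice Q x1)) y1"
    and B_eq: "\<And>w. poly (yslice Q x1) w - poly (yslice Q x1) y1 = (w - y1) * B w"
    using poly_difference_quotient[where p = "yslice Q x1" and c = y1] by blast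
  have "B y1 \<noteq> 0"
    unfolding B(2) using nonsingular by (simp add: x1_def y1_def beval_yslice yslice_pderiv)
  have "\<exists>Dj. isCont Dj x1 \<and> (\<forall>x. poly (coeff Q j) x - poly (coeff Q j) x1 = (x - x1) * Dj x)" for j
    by (rule poly_difference_quotient[where p = "coeff Q j" and c = x1]) blast
  then obtain Dc where Dc: "\<And>j. isCont (Dc j) x1"
    and Dc_eq: "\<And>j x. poly (coeff Q j) x - poly (coeff Q j) x1 = (x - x1) * Dc j x"
    by metis
  define D where "D x w = (\<Sum>j\<le>degree Q. Dc j x * w ^ j)" for x w
  have D_eq: "beval Q x w - beval Q x1 w = (x - x1) * D x w" for x w
  proof -
    have "beval Q x w - beval Q x1 w = (\<Sum>j\<le>degree Q. (poly (coeff Q j) x - poly (coeff Q j) x1) * w ^ j)"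
      by (simp add: beval_eq_sum sum_subtractf algebra_simps)
    also have "\<dots> = (x - x1) * D x w"
      by (simp add: Dc_eq D_def sum_distrib_left mult.assoc)
    finally show ?thesis .
  qed
  have Yt: "(Y \<longlongrightarrow> y1) (at t1)" using Y by (simp add: isCont_def y1_def)
  have Xt: "(X \<longlongrightarrow> x1) (at t1)" using DERIV_isCont[OF X] by (simp add: isCont_def x1_def)
  have Dt: "((\<lambda>t. D (X t) (Y t)) \<longlongrightarrow> D x1 y1) (at t1)"
    unfolding D_def by (intro tendsto_intros isCont_tendsto_compose[OF Dc Xt] Yt)
  have Bt: "((\<lambda>t. B (Y t)) \<longlongrightarrow> B y1) (at t1)" using isCont_tendsto_compose[OF B(1) Yt] .
  have Xq: "((\<lambda>t. (X t - x1) / (t - t1)) \<longlongrightarrow> X') (at t1)"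
    using X by (simp add: has_field_derivative_iff x1_def)
  have "beval Q x1 y1 = 0" using eventually_nhds_x_imp_x[OF zero] by (simp add: x1_def y1_def)
  have "eventually (\<lambda>t. beval Q (X t) (Y t) = 0) (at t1)"
    using zero by (simp add: eventually_at_filter eventually_mono)
  moreover have "eventually (\<lambda>t. B (Y t) \<noteq> 0) (at t1)"
    using tendsto_imp_eventually_ne[OF Bt \<open>B y1 \<noteq> 0\<close>] .
  moreover have "eventually (\<lambda>t. t \<noteq> t1) (at t1)" by (rule eventually_neq_at_within)
  ultimately have "eventually (\<lambda>t. - ((X t - x1) / (t - t1)) * D (X t) (Y t) / B (Y t) = (Y t - y1) / (t - t1)) (at t1)"
  proof eventually_elim
    case (elim t)
    have "0 = beval Q (X t) (Y t) - beval Q x1 (Y t) + (beval Q x1 (Y t) - beval Q x1 y1)"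
      using elim \<open>beval Q x1 y1 = 0\<close> by simp
    also have "\<dots> = (X t - x1) * D (X t) (Y t) + (Y t - y1) * B (Y t)"
      using D_eq B_eq by (simp add: beval_yslice)
    finally have "(Y t - y1) * B (Y t) = - ((X t - x1) * D (X t) (Y t))"
      by (simp add: algebra_simps)
    then have "Y t - y1 = - ((X t - x1) * D (X t) (Y t)) / B (Y t)"
      using elim by (metis minus_divide_left nonzero_mult_div_cancel_right)
    then show ?case using elim by (simp add: divide_simps)
  qed
  moreover have "((\<lambda>t. - ((X t - x1) / (t - t1)) * D (X t) (Y t) / B (Y t)) \<longlongrightarrow> - X' * D x1 y1 / B y1) (at t1)"
    by (intro tendsto_intros Xq Dt Bt \<open>B y1 \<noteq> 0\<close>)
  ultimately have "((\<lambda>t. (Y t - y1) / (t - t1)) \<longlongrightarrow> - X' * D x1 y1 / B y1) (at t1)"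
    by (rule Lim_transform_eventually[rotated])
  then show ?thesis
    unfolding field_differentiable_def has_field_derivative_iff y1_def by blast
qed

lemma has_field_derivative_const_divide_power:
  fixes c t :: complex
  assumes "t \<noteq> 0"
  shows "((\<lambda>t. c / t ^ m) has_field_derivative - (of_nat m * c / t ^ Suc m)) (at t)"
proof -
  have "((\<lambda>t. c / t ^ m) has_field_derivative
      (0 * t ^ m - c * (of_nat m * t ^ (m - 1))) / (t ^ m * t ^ m)) (at t)"
    using assms by (intro derivative_eq_intros) auto
  moreover have "(0 * t ^ m - c * (of_nat m * t ^ (m - 1))) / (t ^ m * t ^ m) = - (of_nat m * c / t ^ Suc m)"
    using assms by (cases m) (simp_all add: field_simps power_add[symmetric])
  ultimately show ?thesis by simp
qed

abbreviation punctured_disc :: "complex set" where "punctured_disc \<equiv> ball 0 1 - {0}"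

lemma open_punctured_disc: "open punctured_disc"
  by (intro open_Diff open_ball finite_imp_closed) auto

section \<open>A level curve without ramification over |x| > r\<close>

locale unramified_curve =
  fixes Q :: bpoly and N :: nat and a :: complex and r :: real
  assumes degree_Q: "degree Q = N" and N_pos: "N \<ge> 1" and coeff_Q_N: "coeff Q N = [:a:]"
    and a_nonzero: "a \<noteq> 0" and r_pos: "r > 0"
    and simple_roots: "\<And>x y. r < cmod x \<Longrightarrow> beval Q x y = 0 \<Longrightarrow> beval (pderiv Q) x y \<noteq> 0"
begin

definition E :: "complex set" where "E = {x. r < cmod x}"

definition S :: "(complex \<times> complex) set" where "S = {(x, y). beval Q x y = 0 \<and> r < cmod x}"

lemma mem_S: "z \<in> S \<longleftrightarrow> beval Q (fst z) (snd z) = 0 \<and> r < cmod (fst z)"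
  by (cases z) (simp add: S_def)

lemma open_E: "open E"
  unfolding E_def by (intro open_Collect_less continuous_intros)

lemma fst_S: "z \<in> S \<Longrightarrow> fst z \<in> E"
  by (auto simp: S_def E_def)

lemma E_nonzero: "x \<in> E \<Longrightarrow> x \<noteq> 0"
  using r_pos by (auto simp: E_def)

lemma degree_yslice: "degree (yslice Q x) = N"
proof (rule antisym)
  show "degree (yslice Q x) \<le> N" using degree_Q by (metis yslice_def map_poly_degree_leq)
  show "N \<le> degree (yslice Q x)" using a_nonzero by (intro le_degree) (simp add: coeff_yslice coeff_Q_N)
qed

lemma lead_coeff_yslice: "lead_coeff (yslice Q x) = a"
  by (simp add: degree_yslice coeff_yslice coeff_Q_N)

lemma yslice_nonzero: "yslice Q x \<noteq> 0"
  using lead_coeff_yslice[of x] a_nonzero by auto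

lemma norm_beval_ge_root_distance:
  assumes "\<epsilon> > 0" and far: "\<And>w. beval Q x w = 0 \<Longrightarrow> \<epsilon> \<le> dist w y"
  shows "cmod a * \<epsilon> ^ N \<le> cmod (beval Q x y)"
proof -
  obtain \<rho> where \<rho>: "smult (lead_coeff (yslice Q x)) (\<Prod>i<degree (yslice Q x). [:- \<rho> i, 1:]) = yslice Q x"
    using complex_poly_decompose' by blast
  have factored: "beval Q x w = a * (\<Prod>i<N. w - \<rho> i)" for w
    by (subst beval_yslice, subst \<rho>[symmetric]) (simp add: lead_coeff_yslice degree_yslice poly_prod coeff_yslice coeff_Q_N)
  have "\<epsilon> \<le> cmod (y - \<rho> i)" if "i < N" for i
    using far[of "\<rho> i"] that by (auto simp: factored dist_norm norm_minus_commute)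
  then have "\<epsilon> ^ N \<le> (\<Prod>i<N. cmod (y - \<rho> i))"
    using prod_mono[of "{..<N}" "\<lambda>_. \<epsilon>"] assms(1) by simp
  then show ?thesis
    by (simp add: factored norm_mult prod_norm mult_left_mono)
qed

lemma eventually_root_near:
  assumes "beval Q x0 y0 = 0" "\<epsilon> > 0"
  shows "eventually (\<lambda>x. \<exists>w. beval Q x w = 0 \<and> dist w y0 < \<epsilon>) (nhds x0)"
proof -
  have "isCont (\<lambda>x. beval Q x y0) x0"
    unfolding beval_def by simp
  then have "((\<lambda>x. beval Q x y0) \<longlongrightarrow> 0) (nhds x0)"
    using assms(1) by (metis isCont_def tendsto_at_iff_tendsto_nhds)
  moreover have "cmod a * \<epsilon> ^ N > 0" using a_nonzero assms(2) by simp
  ultimately have "eventually (\<lambda>x. dist (beval Q x y0) 0 < cmod a * \<epsilon> ^ N) (nhds x0)"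
    by (rule tendstoD)
  then show ?thesis
  proof (rule eventually_mono)
    fix x assume "dist (beval Q x y0) 0 < cmod a * \<epsilon> ^ N"
    then show "\<exists>w. beval Q x w = 0 \<and> dist w y0 < \<epsilon>"
      using norm_beval_ge_root_distance[OF assms(2), of x y0] by (force simp: not_less)
  qed
qed

lemma finite_fibre: "finite {y. beval Q x y = 0}"
  using poly_roots_finite[OF yslice_nonzero[of x]] by (simp add: beval_yslice)

lemma card_fibre:
  assumes "x \<in> E"
  shows "card {y. beval Q x y = 0} = N"
proof -
  have "rsquarefree (yslice Q x)"
    using simple_roots assms by (auto simp: E_def rsquarefree_roots beval_yslice yslice_pderiv)
  then have "N = degree (smult a (\<Prod>z | poly (yslice Q x) z = 0. [:- z, 1:]))"
    using complex_poly_decompose_rsquarefree degree_yslice lead_coeff_yslice by metis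
  also have "\<dots> = card {y. poly (yslice Q x) y = 0}"
    using a_nonzero finite_fibre by (simp add: degree_prod_sum_eq beval_yslice)
  finally show ?thesis by (simp add: beval_yslice)
qed

lemma fibre_nonempty:
  assumes "x \<in> E" shows "\<exists>y. beval Q x y = 0"
proof -
  have "{y. beval Q x y = 0} \<noteq> {}" using card_fibre[OF assms] N_pos by force
  then show ?thesis by blast
qed

text \<open>Over a small disc around x0 each of the N roots over x0 continues to exactly one nearby root,
  and these exhaust the fibre: both fibres have N points.\<close>

lemma roots_near_fibre:
  assumes "x0 \<in> E"
  obtains \<eta> \<epsilon> where "\<eta> > 0" "\<epsilon> > 0" "ball x0 \<eta> \<subseteq> E"
    "\<And>y1 y2 w. beval Q x0 y1 = 0 \<Longrightarrow> beval Q x0 y2 = 0 \<Longrightarrow> dist w y1 < \<epsilon> \<Longrightarrow> dist w y2 < \<epsilon> \<Longrightarrow> y1 = y2"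
    "\<And>x w. x \<in> ball x0 \<eta> \<Longrightarrow> beval Q x w = 0 \<Longrightarrow> \<exists>y0. beval Q x0 y0 = 0 \<and> dist w y0 < \<epsilon>"
    "\<And>x y0. x \<in> ball x0 \<eta> \<Longrightarrow> beval Q x0 y0 = 0 \<Longrightarrow> \<exists>!w. beval Q x w = 0 \<and> dist w y0 < \<epsilon>"
proof -
  define Y0 where "Y0 = {y. beval Q x0 y = 0}"
  obtain \<epsilon> where "\<epsilon> > 0"
    and sep: "\<And>y1 y2 w. y1 \<in> Y0 \<Longrightarrow> y2 \<in> Y0 \<Longrightarrow> dist w y1 < \<epsilon> \<Longrightarrow> dist w y2 < \<epsilon> \<Longrightarrow> y1 = y2"
    using finite_points_separated[OF finite_fibre] unfolding Y0_def by blast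
  have "eventually (\<lambda>x. \<forall>y0\<in>Y0. \<exists>w. beval Q x w = 0 \<and> dist w y0 < \<epsilon>) (nhds x0)"
    using eventually_root_near[OF _ \<open>\<epsilon> > 0\<close>] finite_fibre
    by (intro eventually_ball_finite) (auto simp: Y0_def)
  then obtain \<eta>1 where "\<eta>1 > 0"
    and near: "\<And>x. dist x x0 < \<eta>1 \<Longrightarrow> \<forall>y0\<in>Y0. \<exists>w. beval Q x w = 0 \<and> dist w y0 < \<epsilon>"
    unfolding eventually_nhds_metric by blast
  obtain \<eta>2 where "\<eta>2 > 0" "ball x0 \<eta>2 \<subseteq> E" using open_E assms openE by blast
  define \<eta> where "\<eta> = min \<eta>1 \<eta>2"
  have "\<eta> > 0" "ball x0 \<eta> \<subseteq> E" using \<open>\<eta>1 > 0\<close> \<open>\<eta>2 > 0\<close> \<open>ball x0 \<eta>2 \<subseteq> E\<close> by (auto simp: \<eta>_def)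
  have matching: "(\<forall>w. beval Q x w = 0 \<longrightarrow> (\<exists>y0. beval Q x0 y0 = 0 \<and> dist w y0 < \<epsilon>)) \<and>
      (\<forall>y0. beval Q x0 y0 = 0 \<longrightarrow> (\<exists>!w. beval Q x w = 0 \<and> dist w y0 < \<epsilon>))"
    if "x \<in> ball x0 \<eta>" for x
  proof -
    have "x \<in> E" using that \<open>ball x0 \<eta> \<subseteq> E\<close> by blast
    have "dist x x0 < \<eta>1" using that by (simp add: \<eta>_def dist_commute)
    have fin: "finite Y0" "finite {w. beval Q x w = 0}" using finite_fibre by (simp_all add: Y0_def)
    have card: "card Y0 = card {w. beval Q x w = 0}"
      using card_fibre[OF assms] card_fibre[OF \<open>x \<in> E\<close>] by (simp add: Y0_def)
    have ex: "\<exists>w\<in>{w. beval Q x w = 0}. dist w y0 < \<epsilon>" if "y0 \<in> Y0" for y0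
      using near[OF \<open>dist x x0 < \<eta>1\<close>] that by auto
    have functional: "y1 = y2" if "w \<in> {w. beval Q x w = 0}" "y1 \<in> Y0" "y2 \<in> Y0"
      "dist w y1 < \<epsilon>" "dist w y2 < \<epsilon>" for w y1 y2
      using sep that(2-5) .
    have "(\<forall>w\<in>{w. beval Q x w = 0}. \<exists>y0\<in>Y0. dist w y0 < \<epsilon>) \<and>
        (\<forall>y0\<in>Y0. \<exists>!w. w \<in> {w. beval Q x w = 0} \<and> dist w y0 < \<epsilon>)"
      by (intro conjI ballI card_eq_relation_bijective[OF fin card]) (use ex functional in blast)+
    then show ?thesis unfolding Y0_def by blast
  qed
  show thesis
  proof (rule that[OF \<open>\<eta> > 0\<close> \<open>\<epsilon> > 0\<close> \<open>ball x0 \<eta> \<subseteq> E\<close>])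
    show "y1 = y2" if "beval Q x0 y1 = 0" "beval Q x0 y2 = 0" "dist w y1 < \<epsilon>" "dist w y2 < \<epsilon>"
      for y1 y2 w
      using sep[of y1 y2 w] that unfolding Y0_def by blast
  qed (use matching in blast)+
qed

lemma continuous_on_root_branch:
  assumes unique: "\<And>x. x \<in> T \<Longrightarrow> \<exists>!w. beval Q x w = 0 \<and> dist w y0 < \<epsilon>"
  shows "continuous_on T (\<lambda>x. THE w. beval Q x w = 0 \<and> dist w y0 < \<epsilon>)"
  unfolding continuous_on_iff
proof (intro ballI allI impI)
  define R where "R x = (THE w. beval Q x w = 0 \<and> dist w y0 < \<epsilon>)" for x
  have R: "beval Q x (R x) = 0 \<and> dist (R x) y0 < \<epsilon>" if "x \<in> T" for x
    unfolding R_def using theI'[OF unique[OF that]] .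
  fix x1 e assume "x1 \<in> T" "(0::real) < e"
  define e' where "e' = min e (\<epsilon> - dist (R x1) y0)"
  have "e' > 0" using R[OF \<open>x1 \<in> T\<close>] \<open>e > 0\<close> by (simp add: e'_def)
  then obtain d where "d > 0"
    and near: "\<And>x. dist x x1 < d \<Longrightarrow> \<exists>w. beval Q x w = 0 \<and> dist w (R x1) < e'"
    using eventually_root_near[of x1 "R x1" e'] R[OF \<open>x1 \<in> T\<close>] unfolding eventually_nhds_metric by blast
  have "dist (R x) (R x1) < e" if x: "x \<in> T" "dist x x1 < d" for x
  proof -
    obtain w where w: "beval Q x w = 0" "dist w (R x1) < e'" using near x(2) by blast
    have "dist w y0 \<le> dist w (R x1) + dist (R x1) y0" by (rule dist_triangle)
    then have "dist w y0 < \<epsilon>" using w(2) by (simp add: e'_def)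
    then have "R x = w" unfolding R_def using unique[OF x(1)] w(1) by (intro the1_equality) auto
    then show ?thesis using w(2) by (simp add: e'_def)
  qed
  then show "\<exists>d>0. \<forall>x\<in>T. dist x x1 < d \<longrightarrow> dist (R x) (R x1) < e"
    using \<open>d > 0\<close> by blast
qed

lemma homeomorphism_root_sheet:
  assumes "T \<subseteq> E" and unique: "\<And>x. x \<in> T \<Longrightarrow> \<exists>!w. beval Q x w = 0 \<and> dist w y0 < \<epsilon>"
  shows "homeomorphism (S \<inter> (T \<times> ball y0 \<epsilon>)) T fst (\<lambda>x. (x, THE w. beval Q x w = 0 \<and> dist w y0 < \<epsilon>))"
proof -
  define R where "R x = (THE w. beval Q x w = 0 \<and> dist w y0 < \<epsilon>)" for x
  have R: "beval Q x w = 0 \<and> dist w y0 < \<epsilon> \<longleftrightarrow> w = R x" if "x \<in> T" for x w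
    unfolding R_def using unique[OF that] the1_equality[OF unique[OF that]] theI'[OF unique[OF that]] by blast
  have sheet: "S \<inter> (T \<times> ball y0 \<epsilon>) = (\<lambda>x. (x, R x)) ` T"
  proof (intro equalityI subsetI)
    fix z assume "z \<in> S \<inter> (T \<times> ball y0 \<epsilon>)"
    then show "z \<in> (\<lambda>x. (x, R x)) ` T" using R by (force simp: S_def dist_commute)
  next
    fix z assume "z \<in> (\<lambda>x. (x, R x)) ` T"
    then obtain x where "x \<in> T" "z = (x, R x)" by blast
    then show "z \<in> S \<inter> (T \<times> ball y0 \<epsilon>)"
      using R[OF \<open>x \<in> T\<close>, of "R x"] assms(1) by (auto simp: S_def E_def dist_commute)
  qed
  show ?thesis
    unfolding sheet R_def[symmetric]
    by (rule homeomorphism_graph) (use continuous_on_root_branch[OF unique] in \<open>simp add: R_def\<close>)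
qed

lemma covering_space_S: "covering_space S fst E"
proof (rule covering_spaceI)
  show "continuous_on S fst" by (intro continuous_intros)
  show "fst ` S = E"
  proof (intro equalityI subsetI)
    fix x assume "x \<in> E"
    then obtain y where "beval Q x y = 0" using fibre_nonempty by blast
    with \<open>x \<in> E\<close> have "(x, y) \<in> S" by (simp add: S_def E_def)
    then show "x \<in> fst ` S" by force
  qed (use fst_S in blast)
next
  fix x0 assume "x0 \<in> E"
  obtain \<eta> \<epsilon> where "\<eta> > 0" "\<epsilon> > 0" "ball x0 \<eta> \<subseteq> E"
    and sep: "\<And>y1 y2 w. beval Q x0 y1 = 0 \<Longrightarrow> beval Q x0 y2 = 0 \<Longrightarrow> dist w y1 < \<epsilon> \<Longrightarrow> dist w y2 < \<epsilon> \<Longrightarrow> y1 = y2"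
    and near: "\<And>x w. x \<in> ball x0 \<eta> \<Longrightarrow> beval Q x w = 0 \<Longrightarrow> \<exists>y0. beval Q x0 y0 = 0 \<and> dist w y0 < \<epsilon>"
    and unique: "\<And>x y0. x \<in> ball x0 \<eta> \<Longrightarrow> beval Q x0 y0 = 0 \<Longrightarrow> \<exists>!w. beval Q x w = 0 \<and> dist w y0 < \<epsilon>"
    by (rule roots_near_fibre[OF \<open>x0 \<in> E\<close>]) blast
  define sheet where "sheet y0 = S \<inter> (ball x0 \<eta> \<times> ball y0 \<epsilon>)" for y0
  define sheets where "sheets = sheet ` {y0. beval Q x0 y0 = 0}"
  show "\<exists>T. x0 \<in> T \<and> openin (top_of_set E) T \<and>
         (\<exists>v. \<Union>v = S \<inter> fst -` T \<and> (\<forall>u\<in>v. openin (top_of_set S) u) \<and>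
              pairwise disjnt v \<and> (\<forall>u\<in>v. \<exists>q. homeomorphism u T fst q))"
  proof (intro exI conjI)
    show "x0 \<in> ball x0 \<eta>" using \<open>\<eta> > 0\<close> by simp
    show "openin (top_of_set E) (ball x0 \<eta>)" using \<open>ball x0 \<eta> \<subseteq> E\<close> by (simp add: open_subset)
    show "\<Union>sheets = S \<inter> fst -` ball x0 \<eta>"
    proof (intro equalityI subsetI)
      fix z assume z: "z \<in> S \<inter> fst -` ball x0 \<eta>"
      then obtain y0 where "beval Q x0 y0 = 0" "dist (snd z) y0 < \<epsilon>"
        using near[of "fst z" "snd z"] by (auto simp: S_def split: prod.splits)
      with z show "z \<in> \<Union>sheets"
        unfolding sheets_def sheet_def by (auto simp: mem_Times_iff dist_commute)
    qed (auto simp: sheets_def sheet_def)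
    show "\<forall>u\<in>sheets. openin (top_of_set S) u"
      unfolding sheets_def sheet_def by (auto intro!: openin_open_Int open_Times)
    show "pairwise disjnt sheets"
    proof (rule pairwiseI)
      fix u1 u2 assume "u1 \<in> sheets" "u2 \<in> sheets" "u1 \<noteq> u2"
      then obtain y1 y2 where y: "beval Q x0 y1 = 0" "beval Q x0 y2 = 0" "u1 = sheet y1" "u2 = sheet y2"
        by (auto simp: sheets_def)
      have "y1 = y2" if "z \<in> u1" "z \<in> u2" for z
        using sep[OF y(1,2), of "snd z"] that by (auto simp: y sheet_def mem_Times_iff dist_commute)
      then show "disjnt u1 u2" using \<open>u1 \<noteq> u2\<close> y by (auto simp: disjnt_def)
    qed
    show "\<forall>u\<in>sheets. \<exists>q. homeomorphism u (ball x0 \<eta>) fst q"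
    proof
      fix u assume "u \<in> sheets"
      then obtain y0 where y0: "beval Q x0 y0 = 0" and "u = sheet y0" by (auto simp: sheets_def)
      have "homeomorphism u (ball x0 \<eta>) fst (\<lambda>x. (x, THE w. beval Q x w = 0 \<and> dist w y0 < \<epsilon>))"
        unfolding \<open>u = sheet y0\<close> sheet_def
        by (rule homeomorphism_root_sheet[OF \<open>ball x0 \<eta> \<subseteq> E\<close>]) (rule unique[OF _ y0])
      then show "\<exists>q. homeomorphism u (ball x0 \<eta>) fst q" by blast
    qed
  qed
qed

definition H :: "complex set" where "H = {u. ln r < Re u}"

lemma open_H: "open H"
  unfolding H_def by (rule open_halfspace_Re_gt)

lemma convex_H: "convex H"
  unfolding H_def by (rule convex_halfspace_Re_gt)

lemma add_two_pi_i_H: "u \<in> H \<Longrightarrow> u + two_pi_i k \<in> H"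
  by (simp add: H_def)

lemma exp_in_E_iff: "exp u \<in> E \<longleftrightarrow> u \<in> H"
proof -
  have "exp (ln r) = r" using r_pos by simp
  then show ?thesis by (metis E_def H_def exp_less_cancel_iff mem_Collect_eq norm_exp_eq_Re)
qed

end

section \<open>Lifting the exponential to a component\<close>

locale exp_lift = unramified_curve +
  fixes g :: "complex \<Rightarrow> complex \<times> complex" and u0 :: complex
  assumes continuous_g: "continuous_on H g" and g_in_S: "\<And>u. u \<in> H \<Longrightarrow> g u \<in> S"
    and fst_g: "\<And>u. u \<in> H \<Longrightarrow> fst (g u) = exp u" and u0_in_H: "u0 \<in> H"
begin

text \<open>Each u \<mapsto> g (u + 2 \<pi> i k) is again a lift of exp through the covering, and two lifts
  that agree at one point of the connected set H agree everywhere.\<close>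

lemma lift_shift_eq:
  assumes "u1 \<in> H" "g (u1 + two_pi_i k1) = g (u1 + two_pi_i k2)" "u \<in> H"
  shows "g (u + two_pi_i k1) = g (u + two_pi_i k2)"
proof -
  have cont: "continuous_on H (\<lambda>u. g (u + two_pi_i k))" for k
    by (rule continuous_on_compose2[OF continuous_g]) (auto intro!: continuous_intros add_two_pi_i_H)
  have into: "(\<lambda>u. g (u + two_pi_i k)) \<in> H \<rightarrow> S" for k using g_in_S add_two_pi_i_H by blast
  have lifts: "exp u = fst (g (u + two_pi_i k))" if "u \<in> H" for u k
    using fst_g[OF add_two_pi_i_H[OF that]] by simp
  have "exp \<in> H \<rightarrow> E" using exp_in_E_iff by blast
  from covering_space_lift_unique[OF covering_space_S assms(2) continuous_on_exp[OF continuous_on_id]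
      this cont into lifts cont into lifts convex_connected[OF convex_H] assms(1,3)]
  show ?thesis .
qed

text \<open>Of the N + 1 lifts g (u0 + 2 \<pi> i k), 0 \<le> k \<le> N, of exp u0, two must coincide, as the fibre
  over exp u0 has N points.\<close>

lemma exists_period: "\<exists>m::nat. m > 0 \<and> g (u0 + two_pi_i (int m)) = g u0"
proof -
  define x0 where "x0 = exp u0"
  have "x0 \<in> E" using exp_in_E_iff u0_in_H by (simp add: x0_def)
  define F where "F k = g (u0 + two_pi_i (int k))" for k :: nat
  have into_fibre: "F ` {0..N} \<subseteq> Pair x0 ` {y. beval Q x0 y = 0}"
  proof
    fix z assume "z \<in> F ` {0..N}"
    then obtain k where z: "z = g (u0 + two_pi_i (int k))" by (auto simp: F_def)
    have "u0 + two_pi_i (int k) \<in> H" by (rule add_two_pi_i_H[OF u0_in_H])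
    then have "z \<in> S" "fst z = x0" using g_in_S fst_g by (simp_all add: z x0_def)
    then show "z \<in> Pair x0 ` {y. beval Q x0 y = 0}" by (cases z) (auto simp: S_def)
  qed
  have "card (Pair x0 ` {y. beval Q x0 y = 0}) \<le> N"
    using card_image_le[OF finite_fibre[of x0], of "Pair x0"] card_fibre[OF \<open>x0 \<in> E\<close>] by simp
  then have "\<not> inj_on F {0..N}"
    using card_inj_on_le[OF _ into_fibre finite_imageI[OF finite_fibre[of x0]]] by fastforce
  then obtain k1 k2 where "k1 \<noteq> k2" "F k1 = F k2" unfolding inj_on_def by blast
  then obtain k1 k2 where "k1 < k2" "F k1 = F k2" by (cases "k1 < k2") (auto simp: not_less_iff_gr_or_eq)
  have "u0 - two_pi_i (int k1) \<in> H" using u0_in_H by (simp add: H_def)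
  then have "g ((u0 - two_pi_i (int k1)) + two_pi_i (int k2)) = g ((u0 - two_pi_i (int k1)) + two_pi_i (int k1))"
    using lift_shift_eq[OF u0_in_H, of "int k2" "int k1"] \<open>F k1 = F k2\<close> by (simp add: F_def)
  moreover have "(u0 - two_pi_i (int k1)) + two_pi_i (int k2) = u0 + two_pi_i (int (k2 - k1))"
    using \<open>k1 < k2\<close> by (simp add: of_nat_diff two_pi_i_diff)
  ultimately show ?thesis using \<open>k1 < k2\<close> by (intro exI[of _ "k2 - k1"]) auto
qed

definition m :: nat where "m = (LEAST m. m > 0 \<and> g (u0 + two_pi_i (int m)) = g u0)"

lemma m_pos: "m > 0" and g_period_m: "g (u0 + two_pi_i (int m)) = g u0"
  using LeastI_ex[OF exists_period] unfolding m_def by auto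

lemma m_minimal: "0 < k \<Longrightarrow> k < m \<Longrightarrow> g (u0 + two_pi_i (int k)) \<noteq> g u0"
  using not_less_Least unfolding m_def by blast

lemma lift_periodic: "u \<in> H \<Longrightarrow> g (u + two_pi_i (int m * k)) = g u"
proof (induction k arbitrary: u rule: int_induct[where k = 0])
  case base
  then show ?case by simp
next
  case (step1 i)
  have "g (u + two_pi_i (int m * (i + 1))) = g ((u + two_pi_i (int m)) + two_pi_i (int m * i))"
    by (simp only: add.assoc two_pi_i_add[symmetric]) (simp add: algebra_simps)
  also have "\<dots> = g (u + two_pi_i (int m))" using step1 add_two_pi_i_H by blast
  also have "\<dots> = g u" using lift_shift_eq[OF u0_in_H, of "int m" 0] g_period_m step1 by simp
  finally show ?case .
next
  case (step2 i)
  have "g (u + two_pi_i (int m * (i - 1))) = g ((u + two_pi_i (int m * (i - 1))) + two_pi_i (int m))"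
    using lift_shift_eq[OF u0_in_H, of "int m" 0] g_period_m add_two_pi_i_H[OF step2.prems] by simp
  also have "\<dots> = g (u + two_pi_i (int m * i))"
    by (simp only: add.assoc two_pi_i_add[symmetric]) (simp add: algebra_simps)
  also have "\<dots> = g u" using step2 by blast
  finally show ?case .
qed

lemma lift_eq_iff:
  assumes "u \<in> H" "u' \<in> H"
  shows "g u = g u' \<longleftrightarrow> (\<exists>q. u' = u + two_pi_i (int m * q))"
proof
  assume "g u = g u'"
  then have "exp u' = exp u" using fst_g assms by metis
  then obtain j where j: "u' = u + two_pi_i j" using exp_eq_imp_two_pi_i by blast
  define \<rho> where "\<rho> = j mod int m"
  have \<rho>: "0 \<le> \<rho>" "\<rho> < int m" using m_pos by (auto simp: \<rho>_def)
  have "u + two_pi_i \<rho> = (u + two_pi_i j) + two_pi_i (int m * (- (j div int m)))"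
    unfolding \<rho>_def minus_mult_div_eq_mod[symmetric] by (simp add: two_pi_i_def algebra_simps)
  then have "g (u + two_pi_i \<rho>) = g ((u + two_pi_i j) + two_pi_i (int m * (- (j div int m))))"
    by (simp only:)
  also have "\<dots> = g (u + two_pi_i j)" by (rule lift_periodic[OF add_two_pi_i_H[OF assms(1)]])
  also have "\<dots> = g u" using j \<open>g u = g u'\<close> by simp
  finally have "g (u0 + two_pi_i \<rho>) = g (u0 + two_pi_i 0)"
    using lift_shift_eq[OF assms(1) _ u0_in_H, of \<rho> 0] by simp
  have "\<rho> = 0"
  proof (rule ccontr)
    assume "\<rho> \<noteq> 0"
    then have "0 < nat \<rho>" "nat \<rho> < m" using \<rho> by auto
    then have "g (u0 + two_pi_i (int (nat \<rho>))) \<noteq> g u0" by (rule m_minimal)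
    then show False using \<open>g (u0 + two_pi_i \<rho>) = g (u0 + two_pi_i 0)\<close> \<rho>(1) by simp
  qed
  then have "j = int m * (j div int m)" unfolding \<rho>_def minus_mult_div_eq_mod[symmetric] by simp
  then show "\<exists>q. u' = u + two_pi_i (int m * q)" using j by metis
qed (use lift_periodic assms in auto)

lemma component_eq_image: "connected_component_set S (g u0) = g ` H"
proof
  show "g ` H \<subseteq> connected_component_set S (g u0)"
    using u0_in_H g_in_S connected_continuous_image[OF continuous_g convex_connected[OF convex_H]]
    by (intro connected_component_maximal) auto
  show "connected_component_set S (g u0) \<subseteq> g ` H"
  proof
    fix z assume "z \<in> connected_component_set S (g u0)"
    moreover have "locally path_connected S"
      using covering_space_locally_path_connected_eq[OF covering_space_S]
        open_imp_locally_path_connected[OF open_E] by blast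
    ultimately obtain \<gamma> where \<gamma>: "path \<gamma>" "path_image \<gamma> \<subseteq> S" "pathstart \<gamma> = g u0" "pathfinish \<gamma> = z"
      by (auto simp: path_component_eq_connected_component_set[symmetric] path_component_def)
    define \<alpha> where "\<alpha> = fst \<circ> \<gamma>"
    have "path \<alpha>" unfolding \<alpha>_def by (rule path_continuous_image[OF \<gamma>(1)]) (intro continuous_intros)
    have \<alpha>E: "\<alpha> t \<in> E" if "t \<in> {0..1}" for t
    proof -
      have "\<gamma> t \<in> S" using \<gamma>(2) that by (auto simp: path_image_def)
      then show ?thesis using fst_S by (simp add: \<alpha>_def)
    qed
    then have "path_image \<alpha> \<subseteq> - {0}" using E_nonzero by (auto simp: path_image_def)
    moreover have "pathstart \<alpha> = exp u0" using \<gamma>(3) fst_g[OF u0_in_H] by (simp add: \<alpha>_def pathstart_def)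
    ultimately obtain \<beta> where \<beta>: "path \<beta>" "pathstart \<beta> = u0" "\<And>t. t \<in> {0..1} \<Longrightarrow> exp (\<beta> t) = \<alpha> t"
      using covering_space_lift_path_strong[OF covering_space_exp_punctured_plane _ \<open>path \<alpha>\<close>] by blast
    have \<beta>H: "\<beta> t \<in> H" if "t \<in> {0..1}" for t
      using \<alpha>E[OF that] \<beta>(3)[OF that] exp_in_E_iff by metis
    have "continuous_on {0..1} (g \<circ> \<beta>)"
      using \<beta>(1) \<beta>H unfolding path_def
      by (intro continuous_on_compose continuous_on_subset[OF continuous_g]) auto
    then have "(g \<circ> \<beta>) 1 = \<gamma> 1"
      using covering_space_lift_unique[OF covering_space_S, of "g \<circ> \<beta>" 0 \<gamma> "{0..1}" \<alpha> 1]
        \<beta> \<beta>H \<gamma> \<alpha>E \<open>path \<alpha>\<close> g_in_S fst_g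
      by (auto simp: pathstart_def path_def path_image_def \<alpha>_def)
    then show "z \<in> g ` H" using \<gamma>(4) \<beta>H[of 1] by (auto simp: pathfinish_def)
  qed
qed

text \<open>The component is parametrised by t \<mapsto> g (ln r - m log t) on the punctured disc: the half-plane
  H corresponds to 0 < |t| < 1, and the choice of the branch of log is immaterial because g has
  period 2 \<pi> i m. Conversely a point g u of the component has the coordinate exp (- (u - ln r) / m),
  which is well defined because g u = g u' only if u' - u is a multiple of 2 \<pi> i m.\<close>

definition log_r :: complex where "log_r = of_real (ln r)"

definition disc_param :: "complex \<Rightarrow> complex \<times> complex" where
  "disc_param t = g (log_r - of_nat m * Ln t)"

definition lift_coord :: "complex \<Rightarrow> complex" where
  "lift_coord u = exp (- (u - log_r) / of_nat m)"

definition disc_coord :: "complex \<times> complex \<Rightarrow> complex" where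
  "disc_coord z = lift_coord (SOME u. u \<in> H \<and> g u = z)"

lemma log_param_in_H:
  assumes "t \<in> punctured_disc" "exp lg = t"
  shows "log_r - of_nat m * lg \<in> H"
proof -
  have "exp (Re lg) < 1" using assms by (metis norm_exp_eq_Re mem_ball_0 DiffD1)
  then have "of_nat m * Re lg < 0" using m_pos by (simp add: mult_pos_neg)
  then show ?thesis by (simp add: H_def log_r_def)
qed

lemma disc_param_any_log:
  assumes "t \<in> punctured_disc" "exp lg = t"
  shows "disc_param t = g (log_r - of_nat m * lg)"
proof -
  have "t \<noteq> 0" using assms by simp
  then obtain k where k: "lg = Ln t + two_pi_i k" using exp_eq_imp_two_pi_i assms(2) by (metis exp_Ln)
  have "log_r - of_nat m * lg = (log_r - of_nat m * Ln t) + two_pi_i (int m * (- k))"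
    by (simp add: k two_pi_i_def algebra_simps)
  then have "g (log_r - of_nat m * lg) = g (log_r - of_nat m * Ln t)"
    using lift_periodic[OF log_param_in_H[OF assms(1) exp_Ln[OF \<open>t \<noteq> 0\<close>]]] by (simp only:)
  then show ?thesis by (simp add: disc_param_def)
qed

lemma disc_param_in_image: "t \<in> punctured_disc \<Longrightarrow> disc_param t \<in> g ` H"
  using log_param_in_H[of t "Ln t"] by (auto simp: disc_param_def)

lemma fst_disc_param:
  assumes "t \<in> punctured_disc"
  shows "fst (disc_param t) = of_real r / t ^ m"
proof -
  have "t \<noteq> 0" using assms by simp
  have "fst (disc_param t) = exp (log_r - of_nat m * Ln t)"
    unfolding disc_param_def by (rule fst_g[OF log_param_in_H[OF assms exp_Ln[OF \<open>t \<noteq> 0\<close>]]])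
  also have "\<dots> = of_real r / t ^ m"
    using \<open>t \<noteq> 0\<close> r_pos by (simp add: exp_diff exp_of_nat_mult log_r_def exp_of_real)
  finally show ?thesis .
qed

lemma lift_coord_in_disc: "u \<in> H \<Longrightarrow> lift_coord u \<in> punctured_disc"
  using m_pos by (simp add: lift_coord_def H_def log_r_def divide_neg_pos)

lemma lift_coord_periodic: "lift_coord (u + two_pi_i (int m * k)) = lift_coord u"
proof -
  have "- (u + two_pi_i (int m * k) - log_r) / of_nat m = - (u - log_r) / of_nat m + two_pi_i (- k)"
    using m_pos by (simp add: two_pi_i_def field_simps)
  then show ?thesis by (simp add: lift_coord_def)
qed

lemma some_lift: "z \<in> g ` H \<Longrightarrow> (SOME u. u \<in> H \<and> g u = z) \<in> H \<and> g (SOME u. u \<in> H \<and> g u = z) = z"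
  by (rule someI_ex) auto

lemma disc_coord_in_disc: "z \<in> g ` H \<Longrightarrow> disc_coord z \<in> punctured_disc"
  using some_lift lift_coord_in_disc by (simp add: disc_coord_def)

lemma disc_coord_disc_param:
  assumes "t \<in> punctured_disc"
  shows "disc_coord (disc_param t) = t"
proof -
  have "t \<noteq> 0" using assms by simp
  define u where "u = log_r - of_nat m * Ln t"
  have "u \<in> H" unfolding u_def by (rule log_param_in_H[OF assms exp_Ln[OF \<open>t \<noteq> 0\<close>]])
  have "disc_param t = g u" by (simp add: disc_param_def u_def)
  define u' where "u' = (SOME u'. u' \<in> H \<and> g u' = disc_param t)"
  have "u' \<in> H \<and> g u' = g u"
    unfolding u'_def \<open>disc_param t = g u\<close> by (rule someI_ex) (use \<open>u \<in> H\<close> in blast)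
  then have "u' \<in> H" "g u = g u'" by auto
  then obtain q where "u' = u + two_pi_i (int m * q)" using lift_eq_iff \<open>u \<in> H\<close> by blast
  then have "disc_coord (disc_param t) = lift_coord u"
    by (simp add: disc_coord_def u'_def[symmetric] lift_coord_periodic)
  also have "\<dots> = t" using m_pos \<open>t \<noteq> 0\<close> by (simp add: lift_coord_def u_def)
  finally show ?thesis .
qed

lemma disc_param_disc_coord:
  assumes "z \<in> g ` H"
  shows "disc_param (disc_coord z) = z"
proof -
  define u where "u = (SOME u. u \<in> H \<and> g u = z)"
  have "u \<in> H" "g u = z" using some_lift[OF assms] by (auto simp: u_def)
  have "disc_param (disc_coord z) = g (log_r - of_nat m * (- (u - log_r) / of_nat m))"
    using disc_param_any_log[OF disc_coord_in_disc[OF assms]]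
    by (simp add: disc_coord_def lift_coord_def u_def)
  also have "\<dots> = z" using m_pos \<open>g u = z\<close> by simp
  finally show ?thesis .
qed

lemma isCont_disc_param:
  assumes "t1 \<in> punctured_disc"
  shows "isCont disc_param t1"
proof -
  obtain lg where lg: "isCont lg t1" "\<And>t. t \<noteq> 0 \<Longrightarrow> exp (lg t) = t"
    using continuous_log_at[of t1] assms by auto
  have "log_r - of_nat m * lg t1 \<in> H" using log_param_in_H[OF assms lg(2)] assms by simp
  then have "isCont g (log_r - of_nat m * lg t1)"
    using continuous_g continuous_on_eq_continuous_at[OF open_H] by blast
  moreover have "isCont (\<lambda>t. log_r - of_nat m * lg t) t1" using lg(1) by (intro continuous_intros)
  ultimately have "isCont (\<lambda>t. g (log_r - of_nat m * lg t)) t1" by (rule isCont_o2[rotated])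
  moreover have "eventually (\<lambda>t. disc_param t = g (log_r - of_nat m * lg t)) (nhds t1)"
    using eventually_nhds_in_open[OF open_punctured_disc assms]
    by (rule eventually_mono) (use disc_param_any_log lg(2) in auto)
  ultimately show ?thesis using isCont_cong by metis
qed

lemma disc_param_in_S: "t \<in> punctured_disc \<Longrightarrow> disc_param t \<in> S"
  unfolding disc_param_def by (rule g_in_S, rule log_param_in_H) auto

text \<open>Near a point z1 of the component, disc_coord is an m-th root of r / x taken at the first
  coordinate x: the point of the component with that coordinate is unique near z1, because S is a
  covering of E.\<close>

lemma disc_coord_local_root:
  assumes "z1 \<in> g ` H"
  obtains \<psi> where "isCont \<psi> (fst z1)" "\<psi> (fst z1) = disc_coord z1"
    "eventually (\<lambda>z. \<psi> (fst z) = disc_coord z) (at z1 within g ` H)"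
proof -
  define t1 where "t1 = disc_coord z1"
  have t1: "t1 \<in> punctured_disc" using disc_coord_in_disc[OF assms] by (simp add: t1_def)
  have "disc_param t1 = z1" using disc_param_disc_coord[OF assms] by (simp add: t1_def)
  then have "fst z1 = of_real r / t1 ^ m" using fst_disc_param[OF t1] by simp
  then have "fst z1 \<noteq> 0" and t1_m: "t1 ^ m * fst z1 = of_real r" using r_pos t1 by auto
  obtain \<psi> where \<psi>: "isCont \<psi> (fst z1)" "\<psi> (fst z1) = t1"
    and \<psi>_root: "\<And>x. x \<noteq> 0 \<Longrightarrow> \<psi> x ^ m * x = t1 ^ m * fst z1"
    using continuous_root_at[OF \<open>fst z1 \<noteq> 0\<close> m_pos] by blast
  have "z1 \<in> S" using assms g_in_S by blast
  obtain T U q where "z1 \<in> T" "openin (top_of_set S) T" and hom: "homeomorphism T U fst q"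
    using covering_space_local_homeomorphism[OF covering_space_S \<open>z1 \<in> S\<close>] by metis
  then obtain V where "open V" "T = S \<inter> V" "z1 \<in> V" by (auto simp: openin_open)
  define F where "F = at z1 within g ` H"
  have "(fst \<longlongrightarrow> fst z1) F" unfolding F_def by (intro tendsto_intros)
  then have "((\<lambda>z. \<psi> (fst z)) \<longlongrightarrow> t1) F" using isCont_tendsto_compose[OF \<psi>(1)] \<psi>(2) by simp
  moreover have "((\<lambda>z. disc_param (\<psi> (fst z))) \<longlongrightarrow> z1) F"
    using isCont_tendsto_compose[OF isCont_disc_param[OF t1] calculation] \<open>disc_param t1 = z1\<close> by simp
  ultimately have "eventually (\<lambda>z. \<psi> (fst z) \<in> punctured_disc) F"
    and "eventually (\<lambda>z. disc_param (\<psi> (fst z)) \<in> V) F"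
    using topological_tendstoD open_punctured_disc t1 \<open>open V\<close> \<open>z1 \<in> V\<close> by blast+
  moreover have "eventually (\<lambda>z. z \<in> V \<and> z \<in> g ` H) F"
    unfolding F_def eventually_at_filter
    by (rule eventually_mono[OF eventually_nhds_in_open[OF \<open>open V\<close> \<open>z1 \<in> V\<close>]]) auto
  ultimately have "eventually (\<lambda>z. \<psi> (fst z) = disc_coord z) F"
  proof eventually_elim
    case (elim z)
    define w where "w = disc_param (\<psi> (fst z))"
    have "z \<in> S" using elim(3) g_in_S by blast
    then have "fst z \<noteq> 0" using fst_S E_nonzero by blast
    have "w \<in> T" "z \<in> T" using disc_param_in_S[OF elim(1)] elim(2,3) \<open>z \<in> S\<close>
      by (simp_all add: w_def \<open>T = S \<inter> V\<close>)
    moreover have "\<psi> (fst z) ^ m * fst z = of_real r" using \<psi>_root[OF \<open>fst z \<noteq> 0\<close>] t1_m by simp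
    then have "fst z = of_real r / \<psi> (fst z) ^ m" using elim(1) by (simp add: eq_divide_eq mult.commute)
    then have "fst w = fst z" using fst_disc_param[OF elim(1)] by (simp add: w_def)
    moreover have "\<And>v. v \<in> T \<Longrightarrow> q (fst v) = v" using hom by (simp add: homeomorphism_def)
    ultimately have "w = z" by metis
    then show ?case using disc_coord_disc_param[OF elim(1)] by (simp add: w_def)
  qed
  then show thesis using that[OF \<psi>(1)] \<psi>(2) unfolding F_def t1_def by blast
qed

lemma continuous_on_disc_coord: "continuous_on (g ` H) disc_coord"
  unfolding continuous_on_def
proof
  fix z1 assume "z1 \<in> g ` H"
  then obtain \<psi> where \<psi>: "isCont \<psi> (fst z1)" "\<psi> (fst z1) = disc_coord z1"
    and eq: "eventually (\<lambda>z. \<psi> (fst z) = disc_coord z) (at z1 within g ` H)"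
    by (rule disc_coord_local_root)
  have "(fst \<longlongrightarrow> fst z1) (at z1 within g ` H)" by (intro tendsto_intros)
  then have "((\<lambda>z. \<psi> (fst z)) \<longlongrightarrow> disc_coord z1) (at z1 within g ` H)"
    using isCont_tendsto_compose[OF \<psi>(1)] \<psi>(2) by simp
  then show "(disc_coord \<longlongrightarrow> disc_coord z1) (at z1 within g ` H)"
    using eq by (rule Lim_transform_eventually)
qed

lemma homeomorphism_disc_param: "homeomorphism punctured_disc (g ` H) disc_param disc_coord"
  unfolding homeomorphism_def
proof (intro conjI ballI)
  show "continuous_on punctured_disc disc_param"
    using isCont_disc_param by (simp add: continuous_on_eq_continuous_at[OF open_punctured_disc])
  show "continuous_on (g ` H) disc_coord" by (rule continuous_on_disc_coord)
  show "disc_param ` punctured_disc = g ` H"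
  proof
    show "disc_param ` punctured_disc \<subseteq> g ` H" by (rule image_subsetI) (rule disc_param_in_image)
    show "g ` H \<subseteq> disc_param ` punctured_disc"
    proof
      fix z assume z: "z \<in> g ` H"
      have "z = disc_param (disc_coord z)" using disc_param_disc_coord[OF z] by simp
      then show "z \<in> disc_param ` punctured_disc" using disc_coord_in_disc[OF z] by (rule image_eqI)
    qed
  qed
  show "disc_coord ` g ` H = punctured_disc"
  proof
    show "disc_coord ` g ` H \<subseteq> punctured_disc" by (rule image_subsetI) (rule disc_coord_in_disc)
    show "punctured_disc \<subseteq> disc_coord ` g ` H"
    proof
      fix t assume t: "t \<in> punctured_disc"
      have "t = disc_coord (disc_param t)" using disc_coord_disc_param[OF t] by simp
      then show "t \<in> disc_coord ` g ` H" using disc_param_in_image[OF t] by (rule image_eqI)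
    qed
  qed
qed (simp_all add: disc_coord_disc_param disc_param_disc_coord)

lemma field_differentiable_snd_disc_param:
  assumes "t1 \<in> punctured_disc"
  shows "(\<lambda>t. snd (disc_param t)) field_differentiable (at t1)"
proof (rule implicit_field_differentiable)
  show "((\<lambda>t. of_real r / t ^ m) has_field_derivative - (of_nat m * of_real r / t1 ^ Suc m)) (at t1)"
    using assms by (intro has_field_derivative_const_divide_power) auto
  show "isCont (\<lambda>t. snd (disc_param t)) t1" using isCont_disc_param[OF assms] by (intro continuous_intros)
  have "beval Q (of_real r / t ^ m) (snd (disc_param t)) = 0" if "t \<in> punctured_disc" for t
    using disc_param_in_S[OF that] fst_disc_param[OF that] by (simp add: mem_S)
  then show "eventually (\<lambda>t. beval Q (of_real r / t ^ m) (snd (disc_param t)) = 0) (nhds t1)"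
    using eventually_nhds_in_open[OF open_punctured_disc assms] by (rule eventually_mono[rotated])
  show "beval (pderiv Q) (of_real r / t1 ^ m) (snd (disc_param t1)) \<noteq> 0"
    using disc_param_in_S[OF assms] fst_disc_param[OF assms] simple_roots by (simp add: mem_S)
qed

lemma biholo_punctured_disc_component: "biholo_punctured_disc (connected_component_set S (g u0))"
  unfolding biholo_punctured_disc_def component_eq_image
proof (intro exI conjI)
  show "homeomorphism punctured_disc (g ` H) disc_param disc_coord" by (rule homeomorphism_disc_param)
  have fst_eq: "eventually (\<lambda>t. fst (disc_param t) = of_real r / t ^ m) (nhds t)" if "t \<in> punctured_disc" for t
    using eventually_nhds_in_open[OF open_punctured_disc that] by (rule eventually_mono) (rule fst_disc_param)
  show "(\<lambda>t. fst (disc_param t)) holomorphic_on punctured_disc"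
  proof (rule holomorphic_transform[of "\<lambda>t. of_real r / t ^ m"])
    show "(\<lambda>t. of_real r / t ^ m) holomorphic_on punctured_disc" by (intro holomorphic_intros) auto
  qed (simp add: fst_disc_param)
  show "(\<lambda>t. snd (disc_param t)) holomorphic_on punctured_disc"
    unfolding holomorphic_on_def
    by (simp add: field_differentiable_at_within field_differentiable_snd_disc_param)
  show "\<forall>t\<in>punctured_disc. deriv (\<lambda>w. fst (disc_param w)) t \<noteq> 0 \<or> deriv (\<lambda>w. snd (disc_param w)) t \<noteq> 0"
  proof
    fix t assume t: "t \<in> punctured_disc"
    have "deriv (\<lambda>w. fst (disc_param w)) t = deriv (\<lambda>w. of_real r / w ^ m) t"
      by (rule deriv_cong_ev[OF fst_eq[OF t] refl])
    also have "\<dots> = - (of_nat m * of_real r / t ^ Suc m)"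
      using t by (intro DERIV_imp_deriv has_field_derivative_const_divide_power) auto
    finally show "deriv (\<lambda>w. fst (disc_param w)) t \<noteq> 0 \<or> deriv (\<lambda>w. snd (disc_param w)) t \<noteq> 0"
      using t m_pos r_pos by simp
  qed
qed

end

context unramified_curve
begin

lemma exists_exp_lift:
  assumes "z0 \<in> S"
  obtains g u0 where "exp_lift Q N a r g u0" "g u0 = z0"
proof -
  define u0 where "u0 = Ln (fst z0)"
  have "fst z0 \<in> E" using fst_S assms by blast
  then have "exp u0 = fst z0" using E_nonzero by (simp add: u0_def)
  then have "u0 \<in> H" unfolding exp_in_E_iff[symmetric] using \<open>fst z0 \<in> E\<close> by simp
  have "exp \<in> H \<rightarrow> E" using exp_in_E_iff by blast
  obtain g where "continuous_on H g" "g \<in> H \<rightarrow> S" "g u0 = z0" "\<And>u. u \<in> H \<Longrightarrow> fst (g u) = exp u"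
    using covering_space_lift_strong[OF covering_space_S assms \<open>u0 \<in> H\<close>
        convex_imp_simply_connected[OF convex_H] open_imp_locally_path_connected[OF open_H]
        continuous_on_exp[OF continuous_on_id] \<open>exp \<in> H \<rightarrow> E\<close> \<open>exp u0 = fst z0\<close>] by metis
  moreover have "exp_lift Q N a r g u0"
    by (intro exp_lift.intro unramified_curve_axioms exp_lift_axioms.intro)
      (use calculation \<open>u0 \<in> H\<close> in auto)
  ultimately show thesis using that by blast
qed

theorem biholo_punctured_disc_connected_component:
  assumes "z0 \<in> S"
  shows "biholo_punctured_disc (connected_component_set S z0)"
proof -
  obtain g u0 where "exp_lift Q N a r g u0" "g u0 = z0"
    using exists_exp_lift[OF assms] by blast
  then show ?thesis using exp_lift.biholo_punctured_disc_component[of Q N a r g u0] by simp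
qed

end

section \<open>The normal forms of q\<close>

lemma degree_eq_of_coeffs:
  fixes Q :: bpoly
  assumes "\<And>j. j > N \<Longrightarrow> coeff Q j = 0" "coeff Q N = [:a:]" "a \<noteq> 0"
  shows "degree Q = N"
proof (rule antisym)
  show "degree Q \<le> N" using assms(1) by (intro degree_le) auto
  show "N \<le> degree Q" using assms(2,3) by (intro le_degree) auto
qed

lemma bcoeff_quasi_homogeneous_model:
  fixes k l n :: nat
  assumes "k > 0"
  shows "bcoeff ((bX ^ k + bY ^ l) ^ n) 0 (l * n) = 1"
proof -
  have "poly (yslice ((bX ^ k + bY ^ l) ^ n) 0) y = poly (monom 1 (l * n)) y" for y
    using assms by (simp add: beval_yslice[symmetric] power_mult poly_monom zero_power)
  then have "yslice ((bX ^ k + bY ^ l) ^ n) 0 = monom 1 (l * n)"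
    by (simp add: poly_eq_poly_eq_iff[symmetric] fun_eq_iff)
  then show ?thesis
    using coeff_yslice[of "(bX ^ k + bY ^ l) ^ n" 0 "l * n"] by (simp add: bcoeff_def poly_0_coeff_0)
qed

text \<open>A polynomial whose leading quasi-homogeneous part is (x^k + y^l)^n has no monomial x^i y^j with
  j > l n, or with j = l n and i > 0: its weight l i + k j would exceed the weight k l n of y^(l n).\<close>

lemma leading_y_coeff_of_quasi_homogeneous:
  fixes q :: bpoly and k l n :: nat
  assumes k: "k > 0" and l: "l > 0" and lqh: "lqh_part_is k l q ((bX ^ k + bY ^ l) ^ n)"
  shows "degree q = l * n" and "coeff q (l * n) = [:1:]"
proof -
  define M where "M = (\<Sum>j\<le>degree q. degree (coeff q j))"
  have "{l * i + k * j | i j. bcoeff q i j \<noteq> 0} \<subseteq> (\<lambda>(i, j). l * i + k * j) ` ({..M} \<times> {..degree q})"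
  proof
    fix w assume "w \<in> {l * i + k * j | i j. bcoeff q i j \<noteq> 0}"
    then obtain i j where w: "w = l * i + k * j" and nz: "coeff (coeff q j) i \<noteq> 0"
      by (auto simp: bcoeff_def)
    then have "j \<le> degree q" by (metis coeff_0 le_degree)
    moreover have "i \<le> M"
      using nz le_degree member_le_sum[of j "{..degree q}" "\<lambda>j. degree (coeff q j)"] calculation
      unfolding M_def by fastforce
    ultimately show "w \<in> (\<lambda>(i, j). l * i + k * j) ` ({..M} \<times> {..degree q})" using w by force
  qed
  then have "finite {l * i + k * j | i j. bcoeff q i j \<noteq> 0}" by (rule finite_subset) auto
  then have weight: "l * i + k * j \<le> wdeg k l q" if "bcoeff q i j \<noteq> 0" for i j
    unfolding wdeg_def by (rule Max_ge) (use that in blast)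
  have "lqh_coeff k l q 0 (l * n) = 1"
    using lqh bcoeff_quasi_homogeneous_model[OF k, of l n] by (simp add: lqh_part_is_def)
  then have wdeg: "wdeg k l q = k * (l * n)" and one: "bcoeff q 0 (l * n) = 1"
    by (auto simp: lqh_coeff_def split: if_splits)
  have high: "coeff q j = 0" if "j > l * n" for j
  proof (rule poly_eqI)
    fix i
    have "k * (l * n) < k * j" using that k by simp
    then have "\<not> l * i + k * j \<le> k * (l * n)" by linarith
    then show "coeff (coeff q j) i = coeff 0 i" using weight[of i j] wdeg by (auto simp: bcoeff_def)
  qed
  have "coeff (coeff q (l * n)) i = 0" if "i > 0" for i
    using weight[of i "l * n"] wdeg that l by (auto simp: bcoeff_def)
  then show lead: "coeff q (l * n) = [:1:]"
    using one by (intro poly_eqI) (auto simp: bcoeff_def coeff_pCons split: nat.split)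
  show "degree q = l * n" using degree_eq_of_coeffs[OF high lead] by simp
qed

lemma leading_y_coeff_of_blinear:
  fixes q :: bpoly
  assumes "blinear q" "pderiv q \<noteq> 0"
  shows "degree q = 1" and "coeff q 1 = [:bcoeff q 0 1:]" and "bcoeff q 0 1 \<noteq> 0"
proof -
  have high: "coeff q j = 0" if "j > 1" for j
    by (rule poly_eqI) (use assms(1) that in \<open>auto simp: blinear_def bcoeff_def\<close>)
  show lead: "coeff q 1 = [:bcoeff q 0 1:]"
    by (rule poly_eqI) (use assms(1) in \<open>auto simp: blinear_def bcoeff_def coeff_pCons split: nat.split\<close>)
  have "degree q \<le> 1" using high by (intro degree_le) auto
  moreover have "degree q \<noteq> 0" using assms(2) by (auto simp: pderiv_eq_0_iff)
  ultimately show "degree q = 1" by simp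
  then have "coeff q 1 \<noteq> 0" by (metis degree_0 leading_coeff_0_iff zero_neq_one)
  then show "bcoeff q 0 1 \<noteq> 0" using lead by simp
qed

lemma leading_y_coeff_of_normal_form:
  fixes q :: bpoly
  assumes "blinear q \<or> (\<exists>k l n :: nat. k > 0 \<and> l > 0 \<and> n > 0 \<and> lqh_part_is k l q ((bX ^ k + bY ^ l) ^ n))"
    and "pderiv q \<noteq> 0"
  obtains N a where "N \<ge> 1" "degree q = N" "coeff q N = [:a:]" "a \<noteq> 0"
proof (cases "blinear q")
  case True
  then show thesis using that leading_y_coeff_of_blinear[OF _ assms(2)] by simp
next
  case False
  then obtain k l n :: nat where "k > 0" "l > 0" "n > 0" "lqh_part_is k l q ((bX ^ k + bY ^ l) ^ n)"
    using assms(1) by blast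
  moreover from this have "l * n \<ge> 1" by (simp add: Suc_le_eq)
  ultimately show thesis using that[of "l * n" 1] leading_y_coeff_of_quasi_homogeneous[of k l q n] by simp
qed

lemma unramified_curve_level_set:
  fixes q :: bpoly
  assumes "N \<ge> 1" "degree q = N" "coeff q N = [:a:]" "a \<noteq> 0" "r > 0"
    and "\<And>x y. r < cmod x \<Longrightarrow> beval q x y = c \<Longrightarrow> beval (pderiv q) x y \<noteq> 0"
  shows "unramified_curve (q - bconst c) N a r"
proof
  have same_coeff: "coeff (q - bconst c) j = coeff q j" if "j \<ge> 1" for j
    using that by (simp add: coeff_bconst)
  then show "coeff (q - bconst c) N = [:a:]" using assms(1,3) by simp
  then show "degree (q - bconst c) = N"
    using same_coeff assms(1,2,4) by (intro degree_eq_of_coeffs) (auto simp: coeff_eq_0)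
  show "beval (pderiv (q - bconst c)) x y \<noteq> 0" if "r < cmod x" "beval (q - bconst c) x y = 0" for x y
    using assms(6) that by (simp add: pderiv_diff)
qed (use assms in auto)

theorem lemma1p6:
  fixes p q :: bpoly and \<alpha> :: "bpoly \<times> bpoly" and \<delta> r :: real
  assumes prim: "primitive p"
    and iso: "zero_locus_iso_C p"
    and aut: "poly_automorphism \<alpha>"
    and q_def: "\<forall>x y. beval q x y = beval p (fst (bmap \<alpha> (x, y))) (snd (bmap \<alpha> (x, y)))"
    and shape: "blinear q \<or>
       (\<exists>k l n :: nat. k \<ge> 2 \<and> l \<ge> 2 \<and> coprime k l \<and> n \<ge> 1 \<and>
          lqh_part_is k l q ((bX ^ k + bY ^ l) ^ n))"
    and \<delta>pos: "\<delta> > 0" and rpos: "r > 0"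
    and crit: "\<forall>x y. beval (pderiv q) x y = 0 \<and> cmod (beval q x y) < \<delta> \<longrightarrow> cmod x < r"
  shows "\<forall>c. 0 < cmod c \<and> cmod c < \<delta> \<longrightarrow>
     (\<forall>z \<in> {(x, y). beval q x y = c \<and> cmod x > r}.
        biholo_punctured_disc (connected_component_set {(x, y). beval q x y = c \<and> cmod x > r} z))"
proof (intro allI impI ballI)
  fix c z
  assume c: "0 < cmod c \<and> cmod c < \<delta>" and z: "z \<in> {(x, y). beval q x y = c \<and> cmod x > r}"
  have "pderiv q \<noteq> 0"
  proof
    assume "pderiv q = 0"
    then have "cmod (fst z) < r" using z crit c by (auto split: prod.splits)
    then show False using z by auto
  qed
  from shape have "blinear q \<or>
      (\<exists>k l n :: nat. k > 0 \<and> l > 0 \<and> n > 0 \<and> lqh_part_is k l q ((bX ^ k + bY ^ l) ^ n))"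
  proof (elim disjE exE conjE)
    fix k l n :: nat
    assume "2 \<le> k" "2 \<le> l" "1 \<le> n" "lqh_part_is k l q ((bX ^ k + bY ^ l) ^ n)"
    then show ?thesis by (intro disjI2 exI[of _ k] exI[of _ l] exI[of _ n]) simp
  qed simp
  then obtain N a where N: "N \<ge> 1" "degree q = N" "coeff q N = [:a:]" "a \<noteq> 0"
    using leading_y_coeff_of_normal_form \<open>pderiv q \<noteq> 0\<close> by blast
  have "beval (pderiv q) x y \<noteq> 0" if "r < cmod x" "beval q x y = c" for x y
    using crit c that by auto
  then interpret unramified_curve "q - bconst c" N a r
    by (rule unramified_curve_level_set[OF N rpos])
  have "{(x, y). beval q x y = c \<and> cmod x > r} = S" unfolding set_eq_iff mem_S by simp
  then show "biholo_punctured_disc (connected_component_set {(x, y). beval q x y = c \<and> cmod x > r} z)"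
    using biholo_punctured_disc_connected_component z by simp
qed

end
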